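(* Let $\mathcal{Q}$ be a poset and $\mathfrak A,\mathfrak X$ algebras on $\mathcal{Q}$. The following are equivalent: 1. for every finitely $\mathfrak X$-encoded persistence module $M$ over $\mathcal{Q}$, the Hilbert function $q\mapsto\dim M(q)$ is $\mathfrak A$-measurable; 2. every upset $U\subseteq\mathcal{Q}$ with $U\in\mathfrak X$ belongs to $\mathfrak A$, equivalently $\mathfrak X_{\mathrm{Up}}\subseteq\mathfrak A$. Moreover, the implication (2)$\Rightarrow$(1) remains valid when $\mathrm{Vect}$ is replaced by any abelian category $\mathcal{A}$ and the Hilbert function by $q\mapsto\alpha(A(q))$ for any amplitude $\alpha$ on $\mathcal{A}$, for every finitely $\mathfrak X$-encoded object $A$ of $\mathcal{A}^{\mathcal{Q}}$.
   Context: $\mathrm{Vect}$ is the category of finite-dimensional vector spaces over a field; a persistence module over $\mathcal{Q}$ is a functor $\mathcal{Q}\to\mathrm{Vect}$. An algebra on a set is a family of subsets containing $\emptyset$, closed under complements and finite unions. An upset $U$ satisfies $u\in U,u\le q\Rightarrow q\in U$. $\mathfrak X_{\mathrm{Up}}$ is the algebra generated by the upsets belonging to $\mathfrak X$. An object $A$ of a functor category $\mathcal{C}^{\mathcal{Q}}$ is finitely $\mathfrak X$-encoded if there are a finite poset $\mathcal P$, an order-preserving map $e\colon\mathcal{Q}\to\mathcal P$ with every fiber $e^{-1}(p)\in\mathfrak X$, an object $A'\in\mathcal{C}^{\mathcal P}$ (pointwise finite-dimensional when $\mathcal{C}=\mathrm{Vect}$) and an isomorphism $A\cong A'\circ e$.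 A function $g\colon\mathcal{Q}\to[0,\infty]$ is $\mathfrak A$-measurable if the preimage of every Borel subset of $[0,\infty]$ lies in $\mathfrak A$. An amplitude on an abelian category $\mathcal{A}$ is a function $\alpha\colon\operatorname{ob}\mathcal{A}\to[0,\infty]$ with $\alpha(0)=0$, $\alpha(A)\le\alpha(B)$, $\alpha(C)\le\alpha(B)$ and $\alpha(B)\le\alpha(A)+\alpha(C)$ for every short exact sequence $0\to A\to B\to C\to0$. *)

theory Defs
  imports "HOL-Analysis.Analysis" "HOL-Library.Function_Algebras"
begin

definition upset :: "'q::order set \<Rightarrow> bool" where
  "upset U \<longleftrightarrow> (\<forall>u q. u \<in> U \<longrightarrow> u \<le> q \<longrightarrow> q \<in> U)"

definition gen_algebra :: "'a set \<Rightarrow> 'a set set \<Rightarrow> 'a set set" where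
  "gen_algebra \<Omega> G = \<Inter>{M. algebra \<Omega> M \<and> G \<subseteq> M}"

definition measurable_wrt :: "'q set set \<Rightarrow> ('q \<Rightarrow> ennreal) \<Rightarrow> bool" where
  "measurable_wrt \<AA> g \<longleftrightarrow> (\<forall>B \<in> sets (borel :: ennreal measure). g -` B \<in> \<AA>)"

definition fin_poset :: "nat set \<Rightarrow> (nat \<Rightarrow> nat \<Rightarrow> bool) \<Rightarrow> bool" where
  "fin_poset P le \<longleftrightarrow> finite P \<and> (\<forall>p\<in>P. le p p)
     \<and> (\<forall>p\<in>P. \<forall>p'\<in>P. le p p' \<longrightarrow> le p' p \<longrightarrow> p = p')
     \<and> (\<forall>p\<in>P. \<forall>p'\<in>P. \<forall>p''\<in>P. le p p' \<longrightarrow> le p' p'' \<longrightarrow> le p p'')"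

definition encoding_map :: "'q::order set set \<Rightarrow> nat set \<Rightarrow> (nat \<Rightarrow> nat \<Rightarrow> bool) \<Rightarrow> ('q \<Rightarrow> nat) \<Rightarrow> bool" where
  "encoding_map \<XX> P le e \<longleftrightarrow> fin_poset P le \<and> (\<forall>q. e q \<in> P)
     \<and> (\<forall>q q'. q \<le> q' \<longrightarrow> le (e q) (e q')) \<and> (\<forall>p\<in>P. e -` {p} \<in> \<XX>)"

text \<open>Ambient vector space k^(N); every finite-dimensional k-vector space is isomorphic
  to a subspace of it.\<close>
type_synonym 'k vec = "nat \<Rightarrow> 'k"

definition vscale :: "'k::field \<Rightarrow> 'k vec \<Rightarrow> 'k vec" where
  "vscale c v = (\<lambda>n. c * v n)"

definition fd_subspace :: "'k::field vec set \<Rightarrow> bool" where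
  "fd_subspace S \<longleftrightarrow> module.subspace vscale S \<and> (\<exists>B. finite B \<and> S = module.span vscale B)"

definition vdim :: "'k::field vec set \<Rightarrow> nat" where
  "vdim S = vector_space.dim vscale S"

definition linear_on :: "'k::field vec set \<Rightarrow> ('k vec \<Rightarrow> 'k vec) \<Rightarrow> bool" where
  "linear_on S f \<longleftrightarrow> (\<forall>x\<in>S. \<forall>y\<in>S. f (x + y) = f x + f y)
     \<and> (\<forall>c. \<forall>x\<in>S. f (vscale c x) = vscale c (f x))"

definition vect_pmod :: "'i set \<Rightarrow> ('i \<Rightarrow> 'i \<Rightarrow> bool) \<Rightarrow> ('i \<Rightarrow> 'k::field vec set)
    \<Rightarrow> ('i \<Rightarrow> 'i \<Rightarrow> 'k vec \<Rightarrow> 'k vec) \<Rightarrow> bool" where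
  "vect_pmod I le V \<phi> \<longleftrightarrow> (\<forall>i\<in>I. fd_subspace (V i))
     \<and> (\<forall>i\<in>I. \<forall>j\<in>I. le i j \<longrightarrow> linear_on (V i) (\<phi> i j) \<and> \<phi> i j ` V i \<subseteq> V j)
     \<and> (\<forall>i\<in>I. \<forall>x\<in>V i. \<phi> i i x = x)
     \<and> (\<forall>i\<in>I. \<forall>j\<in>I. \<forall>l\<in>I. le i j \<longrightarrow> le j l \<longrightarrow> (\<forall>x\<in>V i. \<phi> j l (\<phi> i j x) = \<phi> i l x))"

definition vect_fin_encoded :: "'q::order set set \<Rightarrow> ('q \<Rightarrow> 'k::field vec set)
    \<Rightarrow> ('q \<Rightarrow> 'q \<Rightarrow> 'k vec \<Rightarrow> 'k vec) \<Rightarrow> bool" where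
  "vect_fin_encoded \<XX> V \<phi> \<longleftrightarrow>
     (\<exists>(P::nat set) le e (V' :: nat \<Rightarrow> 'k vec set) \<phi>' \<eta>.
        encoding_map \<XX> P le e \<and> vect_pmod P le V' \<phi>'
        \<and> (\<forall>q. linear_on (V q) (\<eta> q) \<and> bij_betw (\<eta> q) (V q) (V' (e q)))
        \<and> (\<forall>q q'. q \<le> q' \<longrightarrow> (\<forall>x\<in>V q. \<eta> q' (\<phi> q q' x) = \<phi>' (e q) (e q') (\<eta> q x))))"

record ('o, 'm) category =
  Dom :: "'m \<Rightarrow> 'o"
  Cod :: "'m \<Rightarrow> 'o"
  Comp :: "'m \<Rightarrow> 'm \<Rightarrow> 'm"   (* Comp C g f = g o f *)
  Idm :: "'o \<Rightarrow> 'm"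

definition is_category :: "('o, 'm) category \<Rightarrow> bool" where
  "is_category C \<longleftrightarrow>
     (\<forall>A. Dom C (Idm C A) = A \<and> Cod C (Idm C A) = A)
   \<and> (\<forall>f g. Cod C f = Dom C g \<longrightarrow> Dom C (Comp C g f) = Dom C f \<and> Cod C (Comp C g f) = Cod C g)
   \<and> (\<forall>f. Comp C (Idm C (Cod C f)) f = f \<and> Comp C f (Idm C (Dom C f)) = f)
   \<and> (\<forall>f g h. Cod C f = Dom C g \<longrightarrow> Cod C g = Dom C h \<longrightarrow>
        Comp C h (Comp C g f) = Comp C (Comp C h g) f)"

definition hom :: "('o, 'm) category \<Rightarrow> 'o \<Rightarrow> 'o \<Rightarrow> 'm set" where
  "hom C A B = {f. Dom C f = A \<and> Cod C f = B}"

definition cat_mono :: "('o, 'm) category \<Rightarrow> 'm \<Rightarrow> bool" where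
  "cat_mono C f \<longleftrightarrow> (\<forall>g h. Cod C g = Dom C f \<longrightarrow> Cod C h = Dom C f \<longrightarrow> Dom C g = Dom C h \<longrightarrow>
       Comp C f g = Comp C f h \<longrightarrow> g = h)"

definition cat_epi :: "('o, 'm) category \<Rightarrow> 'm \<Rightarrow> bool" where
  "cat_epi C f \<longleftrightarrow> (\<forall>g h. Dom C g = Cod C f \<longrightarrow> Dom C h = Cod C f \<longrightarrow> Cod C g = Cod C h \<longrightarrow>
       Comp C g f = Comp C h f \<longrightarrow> g = h)"

definition cat_iso :: "('o, 'm) category \<Rightarrow> 'm \<Rightarrow> bool" where
  "cat_iso C f \<longleftrightarrow> (\<exists>g. g \<in> hom C (Cod C f) (Dom C f)
       \<and> Comp C g f = Idm C (Dom C f) \<and> Comp C f g = Idm C (Cod C f))"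

definition zero_obj :: "('o, 'm) category \<Rightarrow> 'o \<Rightarrow> bool" where
  "zero_obj C Z \<longleftrightarrow> (\<forall>A. (\<exists>!f. f \<in> hom C Z A) \<and> (\<exists>!f. f \<in> hom C A Z))"

definition zero_mor :: "('o, 'm) category \<Rightarrow> 'm \<Rightarrow> bool" where
  "zero_mor C h \<longleftrightarrow> (\<exists>Z f g. zero_obj C Z \<and> f \<in> hom C (Dom C h) Z \<and> g \<in> hom C Z (Cod C h)
       \<and> h = Comp C g f)"

definition is_kernel :: "('o, 'm) category \<Rightarrow> 'm \<Rightarrow> 'm \<Rightarrow> bool" where
  "is_kernel C k f \<longleftrightarrow> Cod C k = Dom C f \<and> zero_mor C (Comp C f k)
     \<and> (\<forall>g. Cod C g = Dom C f \<and> zero_mor C (Comp C f g) \<longrightarrow>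
          (\<exists>!u. u \<in> hom C (Dom C g) (Dom C k) \<and> Comp C k u = g))"

definition is_cokernel :: "('o, 'm) category \<Rightarrow> 'm \<Rightarrow> 'm \<Rightarrow> bool" where
  "is_cokernel C c f \<longleftrightarrow> Dom C c = Cod C f \<and> zero_mor C (Comp C c f)
     \<and> (\<forall>g. Dom C g = Cod C f \<and> zero_mor C (Comp C g f) \<longrightarrow>
          (\<exists>!u. u \<in> hom C (Cod C c) (Cod C g) \<and> Comp C u c = g))"

definition has_bin_products :: "('o, 'm) category \<Rightarrow> bool" where
  "has_bin_products C \<longleftrightarrow> (\<forall>A B. \<exists>P p1 p2. p1 \<in> hom C P A \<and> p2 \<in> hom C P B
     \<and> (\<forall>X f g. f \<in> hom C X A \<and> g \<in> hom C X B \<longrightarrow>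
          (\<exists>!u. u \<in> hom C X P \<and> Comp C p1 u = f \<and> Comp C p2 u = g)))"

definition has_bin_coproducts :: "('o, 'm) category \<Rightarrow> bool" where
  "has_bin_coproducts C \<longleftrightarrow> (\<forall>A B. \<exists>S i1 i2. i1 \<in> hom C A S \<and> i2 \<in> hom C B S
     \<and> (\<forall>X f g. f \<in> hom C A X \<and> g \<in> hom C B X \<longrightarrow>
          (\<exists>!u. u \<in> hom C S X \<and> Comp C u i1 = f \<and> Comp C u i2 = g)))"

text \<open>Abelian category (Freyd's definition: the additive structure is then determined).\<close>
definition abelian_cat :: "('o, 'm) category \<Rightarrow> bool" where
  "abelian_cat C \<longleftrightarrow> is_category C \<and> (\<exists>Z. zero_obj C Z)
     \<and> has_bin_products C \<and> has_bin_coproducts C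
     \<and> (\<forall>f. \<exists>k. is_kernel C k f) \<and> (\<forall>f. \<exists>c. is_cokernel C c f)
     \<and> (\<forall>f. cat_mono C f \<longrightarrow> (\<exists>g. is_kernel C f g))
     \<and> (\<forall>f. cat_epi C f \<longrightarrow> (\<exists>g. is_cokernel C f g))"

definition short_exact :: "('o, 'm) category \<Rightarrow> 'm \<Rightarrow> 'm \<Rightarrow> bool" where
  "short_exact C f g \<longleftrightarrow> Cod C f = Dom C g \<and> is_kernel C f g \<and> is_cokernel C g f"

definition amplitude :: "('o, 'm) category \<Rightarrow> ('o \<Rightarrow> ennreal) \<Rightarrow> bool" where
  "amplitude C \<alpha> \<longleftrightarrow> (\<forall>Z. zero_obj C Z \<longrightarrow> \<alpha> Z = 0)
     \<and> (\<forall>f g. short_exact C f g \<longrightarrow>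
          \<alpha> (Dom C f) \<le> \<alpha> (Cod C f) \<and> \<alpha> (Cod C g) \<le> \<alpha> (Cod C f)
          \<and> \<alpha> (Cod C f) \<le> \<alpha> (Dom C f) + \<alpha> (Cod C g))"

definition cat_functor :: "('o, 'm) category \<Rightarrow> 'i set \<Rightarrow> ('i \<Rightarrow> 'i \<Rightarrow> bool)
    \<Rightarrow> ('i \<Rightarrow> 'o) \<Rightarrow> ('i \<Rightarrow> 'i \<Rightarrow> 'm) \<Rightarrow> bool" where
  "cat_functor C I le F0 F1 \<longleftrightarrow>
     (\<forall>i\<in>I. \<forall>j\<in>I. le i j \<longrightarrow> F1 i j \<in> hom C (F0 i) (F0 j))
   \<and> (\<forall>i\<in>I. F1 i i = Idm C (F0 i))
   \<and> (\<forall>i\<in>I. \<forall>j\<in>I. \<forall>l\<in>I. le i j \<longrightarrow> le j l \<longrightarrow> Comp C (F1 j l) (F1 i j) = F1 i l)"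

definition cat_fin_encoded :: "('o, 'm) category \<Rightarrow> 'q::order set set
    \<Rightarrow> ('q \<Rightarrow> 'o) \<Rightarrow> ('q \<Rightarrow> 'q \<Rightarrow> 'm) \<Rightarrow> bool" where
  "cat_fin_encoded C \<XX> F0 F1 \<longleftrightarrow>
     (\<exists>(P::nat set) le e G0 G1 \<eta>.
        encoding_map \<XX> P le e \<and> cat_functor C P le G0 G1
        \<and> (\<forall>q. \<eta> q \<in> hom C (F0 q) (G0 (e q)) \<and> cat_iso C (\<eta> q))
        \<and> (\<forall>q q'. q \<le> q' \<longrightarrow> Comp C (\<eta> q') (F1 q q') = Comp C (G1 (e q) (e q')) (\<eta> q)))"

end

theory Submission
  imports Defs
begin

text \<open>
  Every fiber of an encoding map e over p is the difference of the preimages of the upset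
  {p'. p \<le> p'} and of the upset {p'. p < p'}. Both preimages are upsets of Q lying in X, so
  once the upsets in X lie in A, so do all fibers. The Hilbert function, and likewise
  q \<mapsto> \<alpha>(A q), is constant on fibers because dimension and amplitudes are invariant
  under isomorphism: an isomorphism f : A \<rightarrow> B is a kernel of B \<rightarrow> 0, which is a cokernel
  of f, whence \<alpha> A \<le> \<alpha> B \<le> \<alpha> A + \<alpha> 0. Its preimages are thus finite unions of fibers.

  Conversely, an upset U \<in> X is the preimage of 1 under the Hilbert function of the module
  pulled back from the chain 0 \<subseteq> k along the indicator map of U, which is an encoding
  map with fibers U and its complement.
\<close>

interpretation vs: vector_space "vscale :: 'k::field \<Rightarrow> 'k vec \<Rightarrow> 'k vec"
  by unfold_locales (auto simp: vscale_def fun_eq_iff algebra_simps)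

interpretation vsp: vector_space_pair "vscale :: 'k::field \<Rightarrow> 'k vec \<Rightarrow> 'k vec" vscale
  by unfold_locales

section \<open>Dimension of subspaces of k^(N)\<close>

lemma linear_on_extend:
  fixes \<eta> :: "'k::field vec \<Rightarrow> 'k vec"
  assumes S: "vs.subspace S" and lin: "linear_on S \<eta>"
  obtains g where "Vector_Spaces.linear vscale vscale g" "\<And>x. x \<in> S \<Longrightarrow> g x = \<eta> x"
proof -
  obtain B where B: "B \<subseteq> S" "vs.independent B" "S \<subseteq> vs.span B"
    by (rule vs.maximal_independent_subset)
  obtain g where g: "Vector_Spaces.linear vscale vscale g" "\<forall>x\<in>B. g x = \<eta> x"
    using vsp.linear_independent_extend[OF B(2)] by blast
  have add: "\<eta> (x + y) = \<eta> x + \<eta> y" if "x \<in> S" "y \<in> S" for x y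
    using lin that unfolding linear_on_def by blast
  have scale: "\<eta> (vscale c x) = vscale c (\<eta> x)" if "x \<in> S" for c x
    using lin that unfolding linear_on_def by blast
  have "\<eta> 0 = 0"
    using add[OF vs.subspace_0[OF S] vs.subspace_0[OF S]] by simp
  then have "vs.subspace {x\<in>S. g x = \<eta> x}"
    using S vsp.linear_0[OF g(1)] vsp.linear_add[OF g(1)] vsp.linear_scale[OF g(1)] add scale
    unfolding vs.subspace_def by auto
  then have "x \<in> {x\<in>S. g x = \<eta> x}" if "x \<in> S" for x
    using vs.span_subspace_induct[of x B] B g that by blast
  then show thesis
    using that[OF g(1)] by blast
qed

lemma dim_linear_inj_image:
  fixes g :: "'k::field vec \<Rightarrow> 'k vec"
  assumes g: "Vector_Spaces.linear vscale vscale g" and S: "vs.subspace S" and inj: "inj_on g S"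
  shows "vs.dim (g ` S) = vs.dim S"
proof -
  obtain B where B: "B \<subseteq> S" "vs.independent B" "S \<subseteq> vs.span B"
    by (rule vs.maximal_independent_subset)
  have S_eq: "vs.span B = S"
    by (rule vs.span_subspace[OF B(1,3) S])
  have "vs.independent (g ` B)"
    using vsp.linear_dependent_inj_imageD[OF g _ inj[folded S_eq]] B(2) by blast
  then have "vs.dim (vs.span (g ` B)) = card (g ` B)"
    by (rule vs.dim_span_eq_card_independent)
  also have "\<dots> = card B"
    by (rule card_image[OF inj_on_subset[OF inj B(1)]])
  also have "\<dots> = vs.dim (vs.span B)"
    by (rule vs.dim_span_eq_card_independent[OF B(2), symmetric])
  finally show ?thesis
    by (simp only: vsp.linear_span_image[OF g] S_eq)
qed

lemma vdim_eq_if_linear_bij: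
  fixes S T :: "'k::field vec set"
  assumes S: "vs.subspace S" and lin: "linear_on S \<eta>" and bij: "bij_betw \<eta> S T"
  shows "vdim S = vdim T"
proof -
  obtain g where g: "Vector_Spaces.linear vscale vscale g" "\<And>x. x \<in> S \<Longrightarrow> g x = \<eta> x"
    using linear_on_extend[OF S lin] by metis
  have "bij_betw g S T"
    using bij by (rule bij_betw_cong[THEN iffD2, rotated]) (simp add: g(2))
  then show ?thesis
    using dim_linear_inj_image[OF g(1) S] by (simp add: vdim_def bij_betw_def)
qed

section \<open>Pullbacks of persistence modules along encoding maps\<close>

lemma vect_pmod_span_mono:
  fixes G :: "'i \<Rightarrow> 'k::field vec set"
  assumes fin: "\<And>i. i \<in> I \<Longrightarrow> finite (G i)"
    and mono: "\<And>i j. i \<in> I \<Longrightarrow> j \<in> I \<Longrightarrow> le i j \<Longrightarrow> G i \<subseteq> G j"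
  shows "vect_pmod I le (\<lambda>i. vs.span (G i)) (\<lambda>_ _ x. x)"
proof -
  have "fd_subspace (vs.span (G i))" if "i \<in> I" for i
    unfolding fd_subspace_def using fin[OF that] by blast
  moreover have "vs.span (G i) \<subseteq> vs.span (G j)" if "i \<in> I" "j \<in> I" "le i j" for i j
    by (rule vs.span_mono[OF mono[OF that]])
  ultimately show ?thesis
    unfolding vect_pmod_def linear_on_def by simp
qed

lemma vect_pmod_pullback:
  assumes pm: "vect_pmod P le V \<phi>"
    and into: "\<And>q. e q \<in> P" and mono: "\<And>q q'. q \<le> q' \<Longrightarrow> le (e q) (e q')"
  shows "vect_pmod UNIV (\<le>) (\<lambda>q. V (e q)) (\<lambda>q q'. \<phi> (e q) (e q'))"
  using pm into mono unfolding vect_pmod_def by (meson order_trans)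

lemma vect_fin_encoded_pullback:
  assumes e: "encoding_map \<XX> P le e" and pm: "vect_pmod P le V \<phi>"
  shows "vect_fin_encoded \<XX> (\<lambda>q. V (e q)) (\<lambda>q q'. \<phi> (e q) (e q'))"
  unfolding vect_fin_encoded_def
proof (intro exI conjI allI impI ballI)
  show "encoding_map \<XX> P le e" by (fact e)
  show "vect_pmod P le V \<phi>" by (fact pm)
  fix q
  show "linear_on (V (e q)) (\<lambda>x. x)" "bij_betw (\<lambda>x. x) (V (e q)) (V (e q))"
    by (simp_all add: linear_on_def bij_betw_def)
qed simp

lemma encoding_map_upset_indicator:
  assumes X: "algebra UNIV \<XX>" and U: "U \<in> \<XX>" "upset U"
  shows "encoding_map \<XX> {0, 1} (\<le>) (\<lambda>q. if q \<in> U then 1 else 0)"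
proof -
  have "(\<lambda>q. if q \<in> U then 1 else 0 :: nat) -` {0} = - U"
    "(\<lambda>q. if q \<in> U then 1 else 0 :: nat) -` {1} = U"
    by auto
  moreover have "- U \<in> \<XX>"
    using algebra.compl_sets[OF X U(1)] by (simp add: Compl_eq_Diff_UNIV)
  ultimately show ?thesis
    using U unfolding encoding_map_def fin_poset_def upset_def by auto
qed

section \<open>Measurability of functions factoring through an encoding\<close>

lemma vimage_in_ring_of_sets_if_fibers:
  assumes M: "ring_of_sets \<Omega> M" and P: "finite P" and into: "\<And>q. e q \<in> P"
    and fibers: "\<And>p. p \<in> P \<Longrightarrow> e -` {p} \<in> M"
  shows "e -` S \<in> M"
proof -
  have "e -` S = (\<Union>p\<in>P \<inter> S. e -` {p})"
    using into by blast
  also have "\<dots> \<in> M"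
    using P fibers by (intro ring_of_sets.finite_UN[OF M]) auto
  finally show ?thesis .
qed

lemma encoding_fiber_in_algebra:
  assumes A: "algebra UNIV \<AA>" and X: "algebra UNIV \<XX>"
    and up: "\<forall>U\<in>\<XX>. upset U \<longrightarrow> U \<in> \<AA>"
    and e: "encoding_map \<XX> P le e" and p: "p \<in> P"
  shows "e -` {p} \<in> \<AA>"
proof -
  have into: "\<And>q. e q \<in> P" and mono: "\<And>q q'. q \<le> q' \<Longrightarrow> le (e q) (e q')"
    and fibers: "\<And>p. p \<in> P \<Longrightarrow> e -` {p} \<in> \<XX>" and P: "fin_poset P le"
    using e unfolding encoding_map_def by blast+
  have fin: "finite P" and refl: "le p p"
    and antisym: "\<And>p'. p' \<in> P \<Longrightarrow> le p p' \<Longrightarrow> le p' p \<Longrightarrow> p' = p"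
    and trans: "\<And>p' p''. p' \<in> P \<Longrightarrow> p'' \<in> P \<Longrightarrow> le p p' \<Longrightarrow> le p' p'' \<Longrightarrow> le p p''"
    using P p unfolding fin_poset_def by blast+
  have X_ring: "ring_of_sets UNIV \<XX>" and A_ring: "ring_of_sets UNIV \<AA>"
    using X A by (simp_all add: algebra_def)
  define U1 where "U1 = e -` {p'. le p p'}"
  define U2 where "U2 = e -` {p'. le p p' \<and> p' \<noteq> p}"
  have "U1 \<in> \<XX>" "U2 \<in> \<XX>"
    unfolding U1_def U2_def
    using vimage_in_ring_of_sets_if_fibers[OF X_ring fin into fibers] by blast+
  moreover have "upset U1"
    unfolding upset_def U1_def using into mono trans by blast
  moreover have "upset U2"
    unfolding upset_def
  proof (intro allI impI)
    fix u q
    assume "u \<in> U2" "u \<le> q"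
    then have u: "le p (e u)" "e u \<noteq> p" and uq: "le (e u) (e q)"
      using mono by (auto simp: U2_def)
    have "le p (e q)"
      using trans[OF into into u(1) uq] .
    moreover have "e q \<noteq> p"
      using antisym[OF into u(1)] u(2) uq by auto
    ultimately show "q \<in> U2"
      by (simp add: U2_def)
  qed
  ultimately have "U1 - U2 \<in> \<AA>"
    using up ring_of_sets.Diff[OF A_ring] by blast
  moreover have "e -` {p} = U1 - U2"
    unfolding U1_def U2_def using refl by auto
  ultimately show ?thesis by simp
qed

lemma measurable_wrt_comp_encoding:
  assumes A: "algebra UNIV \<AA>" and X: "algebra UNIV \<XX>"
    and up: "\<forall>U\<in>\<XX>. upset U \<longrightarrow> U \<in> \<AA>"
    and e: "encoding_map \<XX> P le e"
  shows "measurable_wrt \<AA> (\<lambda>q. h (e q))"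
  unfolding measurable_wrt_def
proof
  fix B :: "ennreal set"
  have "ring_of_sets UNIV \<AA>"
    using A by (simp add: algebra_def)
  moreover have "finite P" "\<And>q. e q \<in> P"
    using e unfolding encoding_map_def fin_poset_def by blast+
  ultimately have "e -` (h -` B) \<in> \<AA>"
    using vimage_in_ring_of_sets_if_fibers encoding_fiber_in_algebra[OF A X up e] by blast
  then show "(\<lambda>q. h (e q)) -` B \<in> \<AA>"
    by (simp add: vimage_def)
qed

section \<open>Isomorphism invariance of amplitudes\<close>

context
  fixes C :: "('o, 'm) category"
  assumes C: "is_category C"
begin

lemma Idm_in_hom: "Idm C A \<in> hom C A A"
  using C by (simp add: is_category_def hom_def)

lemma Comp_in_hom: "f \<in> hom C A B \<Longrightarrow> g \<in> hom C B D \<Longrightarrow> Comp C g f \<in> hom C A D"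
  using C by (simp add: is_category_def hom_def)

lemma Comp_Idm_left: "f \<in> hom C A B \<Longrightarrow> Comp C (Idm C B) f = f"
  using C by (auto simp: is_category_def hom_def)

lemma Comp_Idm_right: "f \<in> hom C A B \<Longrightarrow> Comp C f (Idm C A) = f"
  using C by (auto simp: is_category_def hom_def)

lemma Comp_assoc:
  "f \<in> hom C A B \<Longrightarrow> g \<in> hom C B D \<Longrightarrow> h \<in> hom C D E \<Longrightarrow>
    Comp C h (Comp C g f) = Comp C (Comp C h g) f"
  using C by (simp add: is_category_def hom_def)

lemma zero_obj_hom_from_eq:
  assumes "zero_obj C Z" "u \<in> hom C Z X" "v \<in> hom C Z X"
  shows "u = v"
proof -
  have "\<exists>!f. f \<in> hom C Z X"
    using assms(1) by (simp add: zero_obj_def)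
  with assms(2,3) show ?thesis
    by (simp add: Ex1_def) blast
qed

lemma zero_obj_hom_into_eq:
  assumes "zero_obj C Z" "u \<in> hom C X Z" "v \<in> hom C X Z"
  shows "u = v"
proof -
  have "\<exists>!f. f \<in> hom C X Z"
    using assms(1) by (simp add: zero_obj_def)
  with assms(2,3) show ?thesis
    by (simp add: Ex1_def) blast
qed

lemma zero_mor_into_zero_obj:
  assumes Z: "zero_obj C Z" and f: "f \<in> hom C A Z"
  shows "zero_mor C f"
  unfolding zero_mor_def
proof (intro exI conjI)
  show "zero_obj C Z" by (fact Z)
  show "f \<in> hom C (Dom C f) Z" "Idm C Z \<in> hom C Z (Cod C f)"
    using f Idm_in_hom by (simp_all add: hom_def)
  show "f = Comp C (Idm C Z) f"
    using Comp_Idm_left[OF f] by simp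
qed

lemma zero_mor_factors_through_zero_obj:
  assumes Z: "zero_obj C Z" and h: "zero_mor C h" "h \<in> hom C A B" and t: "t \<in> hom C A Z"
  obtains u where "u \<in> hom C Z B" "h = Comp C u t"
proof -
  obtain Z' a b where Z': "zero_obj C Z'" and a: "a \<in> hom C A Z'" and b: "b \<in> hom C Z' B"
    and hab: "h = Comp C b a"
    using h unfolding zero_mor_def hom_def by auto
  obtain i where i: "i \<in> hom C Z Z'"
    using Z unfolding zero_obj_def by blast
  have "a = Comp C i t"
    by (rule zero_obj_hom_into_eq[OF Z' a Comp_in_hom[OF t i]])
  then have "h = Comp C (Comp C b i) t"
    using hab Comp_assoc[OF t i b] by simp
  then show thesis
    using that Comp_in_hom[OF i b] by blast
qed

lemma is_kernel_iso:
  assumes Z: "zero_obj C Z" and f: "f \<in> hom C A B" "cat_iso C f" and t: "t \<in> hom C B Z"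
  shows "is_kernel C f t"
  unfolding is_kernel_def
proof (intro conjI allI impI)
  obtain g where g: "g \<in> hom C B A" "Comp C g f = Idm C A" "Comp C f g = Idm C B"
    using f unfolding cat_iso_def hom_def by auto
  show "Cod C f = Dom C t"
    using f t by (simp add: hom_def)
  show "zero_mor C (Comp C t f)"
    by (rule zero_mor_into_zero_obj[OF Z Comp_in_hom[OF f(1) t]])
  fix k
  assume "Cod C k = Dom C t \<and> zero_mor C (Comp C t k)"
  then have k: "k \<in> hom C (Dom C k) B"
    using t by (simp add: hom_def)
  show "\<exists>!u. u \<in> hom C (Dom C k) (Dom C f) \<and> Comp C f u = k"
  proof (rule ex1I[of _ "Comp C g k"])
    have "Comp C f (Comp C g k) = k"
      using Comp_assoc[OF k g(1) f(1)] g(3) Comp_Idm_left[OF k] by simp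
    then show "Comp C g k \<in> hom C (Dom C k) (Dom C f) \<and> Comp C f (Comp C g k) = k"
      using Comp_in_hom[OF k g(1)] f(1) by (simp add: hom_def)
  next
    fix u
    assume u: "u \<in> hom C (Dom C k) (Dom C f) \<and> Comp C f u = k"
    then have u_hom: "u \<in> hom C (Dom C k) A"
      using f(1) by (simp add: hom_def)
    have "u = Comp C (Comp C g f) u"
      using g(2) Comp_Idm_left[OF u_hom] by simp
    also have "\<dots> = Comp C g k"
      using Comp_assoc[OF u_hom f(1) g(1)] u by simp
    finally show "u = Comp C g k" .
  qed
qed

lemma is_cokernel_iso:
  assumes Z: "zero_obj C Z" and f: "f \<in> hom C A B" "cat_iso C f" and t: "t \<in> hom C B Z"
  shows "is_cokernel C t f"
  unfolding is_cokernel_def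
proof (intro conjI allI impI)
  obtain g where g: "g \<in> hom C B A" "Comp C f g = Idm C B"
    using f unfolding cat_iso_def hom_def by auto
  show "Dom C t = Cod C f"
    using f t by (simp add: hom_def)
  have tf: "Comp C t f \<in> hom C A Z"
    by (rule Comp_in_hom[OF f(1) t])
  show "zero_mor C (Comp C t f)"
    by (rule zero_mor_into_zero_obj[OF Z tf])
  fix k
  assume "Dom C k = Cod C f \<and> zero_mor C (Comp C k f)"
  then have k: "k \<in> hom C B (Cod C k)" and kf: "zero_mor C (Comp C k f)"
    using f by (simp_all add: hom_def)
  \<comment> \<open>Since f is split epi, k factors through t as soon as k f does through t f.\<close>
  obtain u where u: "u \<in> hom C Z (Cod C k)" "Comp C k f = Comp C u (Comp C t f)"
    using zero_mor_factors_through_zero_obj[OF Z kf Comp_in_hom[OF f(1) k] tf] by metis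
  have "k = Comp C (Comp C k f) g"
    using Comp_assoc[OF g(1) f(1) k] g(2) Comp_Idm_right[OF k] by simp
  also have "\<dots> = Comp C u (Comp C t (Comp C f g))"
    using u(2) Comp_assoc[OF f(1) t u(1)] Comp_assoc[OF g(1) tf u(1)] Comp_assoc[OF g(1) f(1) t]
    by simp
  also have "\<dots> = Comp C u t"
    using g(2) Comp_Idm_right[OF t] by simp
  finally have k_eq: "k = Comp C u t" .
  have t_Cod: "Cod C t = Z"
    using t by (simp add: hom_def)
  show "\<exists>!v. v \<in> hom C (Cod C t) (Cod C k) \<and> Comp C v t = k"
  proof (rule ex1I[of _ u])
    show "u \<in> hom C (Cod C t) (Cod C k) \<and> Comp C u t = k"
      using u(1) k_eq t_Cod by simp
  next
    fix v
    assume "v \<in> hom C (Cod C t) (Cod C k) \<and> Comp C v t = k"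
    then show "v = u"
      using zero_obj_hom_from_eq[OF Z _ u(1)] t_Cod by simp
  qed
qed

end

lemma amplitude_iso_eq:
  assumes ab: "abelian_cat C" and amp: "amplitude C \<alpha>" and f: "f \<in> hom C A B" "cat_iso C f"
  shows "\<alpha> A = \<alpha> B"
proof -
  have C: "is_category C"
    using ab by (simp add: abelian_cat_def)
  obtain Z where Z: "zero_obj C Z"
    using ab unfolding abelian_cat_def by blast
  obtain t where t: "t \<in> hom C B Z"
    using Z unfolding zero_obj_def by blast
  have "short_exact C f t"
    using is_kernel_iso[OF C Z f t] is_cokernel_iso[OF C Z f t] f(1) t
    by (simp add: short_exact_def hom_def)
  then have "\<alpha> A \<le> \<alpha> B" "\<alpha> B \<le> \<alpha> A + \<alpha> Z"
    using amp f(1) t unfolding amplitude_def hom_def by auto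
  moreover have "\<alpha> Z = 0"
    using amp Z unfolding amplitude_def by blast
  ultimately show ?thesis
    by simp
qed

lemma hilbert_function_measurable:
  fixes V :: "'q::order \<Rightarrow> 'k::field vec set"
  assumes A: "algebra UNIV \<AA>" and X: "algebra UNIV \<XX>"
    and up: "\<forall>U\<in>\<XX>. upset U \<longrightarrow> U \<in> \<AA>"
    and pm: "vect_pmod UNIV (\<le>) V \<phi>" and enc: "vect_fin_encoded \<XX> V \<phi>"
  shows "measurable_wrt \<AA> (\<lambda>q. of_nat (vdim (V q)))"
proof -
  obtain P le e V' \<phi>' \<eta> where e: "encoding_map \<XX> (P::nat set) le e"
    and iso: "\<forall>q. linear_on (V q) (\<eta> q) \<and> bij_betw (\<eta> q) (V q) (V' (e q))"
    using enc unfolding vect_fin_encoded_def by blast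
  have "vdim (V q) = vdim (V' (e q))" for q
  proof (rule vdim_eq_if_linear_bij[where \<eta> = "\<eta> q"])
    show "vs.subspace (V q)"
      using pm by (simp add: vect_pmod_def fd_subspace_def)
  qed (use iso in simp_all)
  then show ?thesis
    using measurable_wrt_comp_encoding[OF A X up e, of "\<lambda>p. of_nat (vdim (V' p))"] by simp
qed

lemma amplitude_measurable:
  fixes F0 :: "'q::order \<Rightarrow> 'o" and C :: "('o, 'm) category"
  assumes A: "algebra UNIV \<AA>" and X: "algebra UNIV \<XX>"
    and up: "\<forall>U\<in>\<XX>. upset U \<longrightarrow> U \<in> \<AA>"
    and ab: "abelian_cat C" and amp: "amplitude C \<alpha>" and enc: "cat_fin_encoded C \<XX> F0 F1"
  shows "measurable_wrt \<AA> (\<lambda>q. \<alpha> (F0 q))"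
proof -
  obtain P le e G0 G1 \<eta> where e: "encoding_map \<XX> (P::nat set) le e"
    and iso: "\<forall>q. \<eta> q \<in> hom C (F0 q) (G0 (e q)) \<and> cat_iso C (\<eta> q)"
    using enc unfolding cat_fin_encoded_def by blast
  have "\<alpha> (F0 q) = \<alpha> (G0 (e q))" for q
    using amplitude_iso_eq[OF ab amp] iso by blast
  then show ?thesis
    using measurable_wrt_comp_encoding[OF A X up e, of "\<lambda>p. \<alpha> (G0 p)"] by simp
qed

lemma upset_in_algebra_if_hilbert_measurable:
  fixes U :: "'q::order set"
  assumes X: "algebra UNIV \<XX>"
    and hilbert: "\<forall>(V :: 'q \<Rightarrow> 'k::field vec set) \<phi>.
       vect_pmod UNIV (\<le>) V \<phi> \<and> vect_fin_encoded \<XX> V \<phi> \<longrightarrow>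
       measurable_wrt \<AA> (\<lambda>q. of_nat (vdim (V q)))"
    and U: "U \<in> \<XX>" "upset U"
  shows "U \<in> \<AA>"
proof -
  define e where "e q = (if q \<in> U then 1 else 0 :: nat)" for q
  define G :: "nat \<Rightarrow> 'k vec set" where "G p = (if p = 1 then {1} else {})" for p
  have e: "encoding_map \<XX> {0, 1} (\<le>) e"
    unfolding e_def by (rule encoding_map_upset_indicator[OF X U])
  have pm: "vect_pmod {0, 1} (\<le>) (\<lambda>p. vs.span (G p)) (\<lambda>_ _ x. x)"
    by (rule vect_pmod_span_mono) (auto simp: G_def)
  have "measurable_wrt \<AA> (\<lambda>q. of_nat (vdim (vs.span (G (e q)))))"
  proof -
    have "\<And>q. e q \<in> {0, 1}" "\<And>q q'. q \<le> q' \<Longrightarrow> e q \<le> e q'"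
      using e unfolding encoding_map_def by blast+
    then have "vect_pmod UNIV (\<le>) (\<lambda>q. vs.span (G (e q))) (\<lambda>_ _ x. x)"
      by (rule vect_pmod_pullback[OF pm])
    then show ?thesis
      using hilbert vect_fin_encoded_pullback[OF e pm] by auto
  qed
  then have "(\<lambda>q. of_nat (vdim (vs.span (G (e q)))) :: ennreal) -` {1} \<in> \<AA>"
    unfolding measurable_wrt_def by simp
  moreover have "vdim (vs.span (G (e q))) = e q" for q
  proof -
    have "(1 :: 'k vec) \<noteq> 0"
      by (simp add: fun_eq_iff)
    then have "vs.independent (G (e q))"
      unfolding G_def by (simp add: vs.independent_insert vs.independent_empty)
    from vs.dim_span_eq_card_independent[OF this] show ?thesis
      by (simp add: vdim_def G_def e_def)
  qed
  then have "(\<lambda>q. of_nat (vdim (vs.span (G (e q)))) :: ennreal) -` {1} = U"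
    by (auto simp: e_def split: if_splits)
  ultimately show ?thesis
    by simp
qed

lemma gen_algebra_subset_iff:
  assumes "algebra \<Omega> M"
  shows "gen_algebra \<Omega> G \<subseteq> M \<longleftrightarrow> G \<subseteq> M"
  using assms unfolding gen_algebra_def by blast

theorem mainTheorem18:
  fixes \<AA> \<XX> :: "'q::order set set"
  assumes "algebra UNIV \<AA>" and "algebra UNIV \<XX>"
  shows "((\<forall>(V :: 'q \<Rightarrow> 'k::field vec set) \<phi>.
             vect_pmod UNIV (\<le>) V \<phi> \<and> vect_fin_encoded \<XX> V \<phi> \<longrightarrow>
             measurable_wrt \<AA> (\<lambda>q. of_nat (vdim (V q))))
          \<longleftrightarrow> (\<forall>U\<in>\<XX>. upset U \<longrightarrow> U \<in> \<AA>))
       \<and> ((\<forall>U\<in>\<XX>. upset U \<longrightarrow> U \<in> \<AA>) \<longleftrightarrow> gen_algebra UNIV {U\<in>\<XX>. upset U} \<subseteq> \<AA>)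
       \<and> ((\<forall>U\<in>\<XX>. upset U \<longrightarrow> U \<in> \<AA>) \<longrightarrow>
           (\<forall>(C :: ('o, 'm) category) \<alpha> F0 F1.
              abelian_cat C \<and> amplitude C \<alpha> \<and> cat_functor C UNIV (\<le>) F0 F1
              \<and> cat_fin_encoded C \<XX> F0 F1 \<longrightarrow>
              measurable_wrt \<AA> (\<lambda>q. \<alpha> (F0 q))))"
proof -
  let ?up = "\<forall>U\<in>\<XX>. upset U \<longrightarrow> U \<in> \<AA>"
  let ?hilbert = "\<forall>(V :: 'q \<Rightarrow> 'k::field vec set) \<phi>.
    vect_pmod UNIV (\<le>) V \<phi> \<and> vect_fin_encoded \<XX> V \<phi> \<longrightarrow>
    measurable_wrt \<AA> (\<lambda>q. of_nat (vdim (V q)))"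
  have hilbert_iff: "?hilbert \<longleftrightarrow> ?up"
  proof
    assume hilbert: ?hilbert
    show ?up
      using upset_in_algebra_if_hilbert_measurable[OF assms(2) hilbert] by blast
  next
    assume up: ?up
    show ?hilbert
      using hilbert_function_measurable[OF assms up] by blast
  qed
  have gen_iff: "?up \<longleftrightarrow> gen_algebra UNIV {U\<in>\<XX>. upset U} \<subseteq> \<AA>"
    unfolding gen_algebra_subset_iff[OF assms(1)] by blast
  have amplitude: "?up \<longrightarrow>
      (\<forall>(C :: ('o, 'm) category) \<alpha> F0 F1.
         abelian_cat C \<and> amplitude C \<alpha> \<and> cat_functor C UNIV (\<le>) F0 F1
         \<and> cat_fin_encoded C \<XX> F0 F1 \<longrightarrow> measurable_wrt \<AA> (\<lambda>q. \<alpha> (F0 q)))"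
    using amplitude_measurable[OF assms] by blast
  show ?thesis
    by (intro conjI hilbert_iff gen_iff amplitude)
qed

end
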